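(* Consider a single indivisible item offered by a seller (player $0$) to a finite set $N$ of $n \ge 2$ bidders. After observing the profile of bids $b=(b_1,\dots,b_n)$, with the bids ordered as $b_{(1)}>b_{(2)}>\cdots>b_{(n)}$, the seller (in the non-credible second-price auction) selects a winner $y\in N$ and a price $t_y\in[0,b_y]$; all other bidders pay $0$. The seller's utility is $$u_0 = t_y - c\big(t_y - p(b)\big),$$ where $p(b)=b_{(2)}$ is the price prescribed by the second-price rule and $c:\mathbb{R}\to\mathbb{R}$ is a differentiable convex function that is strictly increasing for $x\ge 0$, strictly decreasing for $x<0$, with $c(0)=0$ and $c'(0)\le 1$. Then, in the symmetric Perfect Bayesian equilibrium in undominated strategies, the seller chooses the winner $$y^*=\{i: b_i=b_{(1)}\}$$ and the price $$t^*_{y}=\min\{b_{(1)},\, b_{(2)}+\gamma\},$$ where $\gamma=[c']^{-1}(1)>0$, i.e. $\gamma>0$ is the point at which $c'(\gamma)=1$.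
   Context: Bidders observe only whether they win and, if they win, their own payment; the seller observes all bids. The restriction $t_y\le b_y$ means the seller can overcharge the winner up to the winner's own bid but no further. The function $c$ is interpreted as the seller's cost of breaking the auction rules. *)

theory Defs
  imports "HOL-Analysis.Analysis"
begin

definition first_bid :: "'a set \<Rightarrow> ('a \<Rightarrow> real) \<Rightarrow> real" where
  "first_bid N b = Max (b ` N)"

definition second_bid :: "'a set \<Rightarrow> ('a \<Rightarrow> real) \<Rightarrow> real" where
  "second_bid N b = Max (b ` N - {first_bid N b})"

definition sp_price :: "'a set \<Rightarrow> ('a \<Rightarrow> real) \<Rightarrow> real" where
  "sp_price N b = second_bid N b"

definition feasible :: "'a set \<Rightarrow> ('a \<Rightarrow> real) \<Rightarrow> 'a \<Rightarrow> real \<Rightarrow> bool" where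
  "feasible N b y t \<longleftrightarrow> y \<in> N \<and> 0 \<le> t \<and> t \<le> b y"

definition seller_utility :: "(real \<Rightarrow> real) \<Rightarrow> 'a set \<Rightarrow> ('a \<Rightarrow> real) \<Rightarrow> real \<Rightarrow> real" where
  "seller_utility c N b t = t - c (t - sp_price N b)"

definition seller_optimal :: "(real \<Rightarrow> real) \<Rightarrow> 'a set \<Rightarrow> ('a \<Rightarrow> real) \<Rightarrow> 'a \<Rightarrow> real \<Rightarrow> bool" where
  "seller_optimal c N b y t \<longleftrightarrow> feasible N b y t \<and>
     (\<forall>y' t'. feasible N b y' t' \<longrightarrow> seller_utility c N b t' \<le> seller_utility c N b t)"

definition gamma :: "(real \<Rightarrow> real) \<Rightarrow> real" where
  "gamma c = (THE x. deriv c x = 1)"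

end

theory Submission
  imports Defs
begin

text \<open>Only the price matters to the seller, and every price in \<open>[0, b_(1)]\<close> is feasible by
  letting the highest bidder win. With \<open>p = b_(2)\<close> the utility is \<open>u(t) = p + g(t - p)\<close> for the net
  gain \<open>g(x) = x - c(x)\<close>. Convexity makes \<open>c'\<close> increasing, so \<open>g' = 1 - c'\<close> is positive below \<open>\<gamma>\<close> and
  negative above it: \<open>g\<close> is strictly unimodal with peak \<open>\<gamma>\<close>, and \<open>u\<close> has the unique maximiser
  \<open>min(b_(1), p + \<gamma>)\<close> on \<open>[0, b_(1)]\<close>. As \<open>\<gamma> > 0\<close>, this price exceeds \<open>p\<close>, which bounds every bid
  except the highest one, so only the highest bidder can be charged it.\<close>

lemma first_bid_in:
  assumes "finite N" "N \<noteq> {}"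
  shows "first_bid N b \<in> b ` N"
  using assms unfolding first_bid_def by simp

lemma bid_le_first_bid:
  assumes "finite N" "i \<in> N"
  shows "b i \<le> first_bid N b"
  using assms unfolding first_bid_def by simp

lemma second_bid_in:
  assumes "finite N" "inj_on b N" "card N \<ge> 2"
  shows "second_bid N b \<in> b ` N - {first_bid N b}"
proof -
  have "card (b ` N) \<ge> 2"
    using assms card_image by metis
  moreover have "card (b ` N) \<le> 1" if "b ` N - {first_bid N b} = {}"
    using card_mono[of "{first_bid N b}" "b ` N"] that by auto
  ultimately have "b ` N - {first_bid N b} \<noteq> {}"
    by linarith
  then show ?thesis
    using assms(1) unfolding second_bid_def by (intro Max_in) auto
qed

lemma bid_le_second_bid:
  assumes "finite N" "i \<in> N" "b i \<noteq> first_bid N b"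
  shows "b i \<le> second_bid N b"
  using assms unfolding second_bid_def by (intro Max_ge) auto

lemma second_bid_less_first_bid:
  assumes "finite N" "inj_on b N" "card N \<ge> 2"
  shows "second_bid N b < first_bid N b"
  using second_bid_in[OF assms] bid_le_first_bid[OF assms(1), of _ b] by force

lemma exists_feasible_iff:
  assumes "finite N" "N \<noteq> {}"
  shows "(\<exists>y. feasible N b y t) \<longleftrightarrow> 0 \<le> t \<and> t \<le> first_bid N b"
proof
  show "\<exists>y. feasible N b y t" if "0 \<le> t \<and> t \<le> first_bid N b"
    using first_bid_in[OF assms, of b] that unfolding feasible_def by force
qed (use bid_le_first_bid[OF assms(1), of _ b] in \<open>force simp: feasible_def\<close>)

lemma convex_deriv_mono:
  fixes c :: "real \<Rightarrow> real"
  assumes "convex_on UNIV c" "\<forall>x. c differentiable (at x)" "x \<le> y"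
  shows "deriv c x \<le> deriv c y"
proof (cases "x = y")
  case False
  have tangent: "c v - c u \<ge> deriv c u * (v - u)" for u v
    using assms(1,2) by (intro convex_on_imp_above_tangent) (auto simp: DERIV_deriv_iff_real_differentiable)
  have "(deriv c x - deriv c y) * (y - x) \<le> 0"
    using tangent[of x y] tangent[of y x] by (simp add: algebra_simps)
  then show ?thesis
    using assms(3) False by (simp add: mult_le_0_iff)
qed simp

lemma convex_deriv_below_above_one:
  fixes c :: "real \<Rightarrow> real"
  assumes "convex_on UNIV c" "\<forall>x. c differentiable (at x)"
    and "\<exists>!x. deriv c x = 1" "deriv c G = 1"
  shows "z < G \<Longrightarrow> deriv c z < 1" and "G < z \<Longrightarrow> deriv c z > 1"
proof -
  have "deriv c z \<noteq> 1" if "z \<noteq> G"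
    using assms(3,4) that by blast
  then show "z < G \<Longrightarrow> deriv c z < 1" and "G < z \<Longrightarrow> deriv c z > 1"
    using convex_deriv_mono[OF assms(1,2), of z G] convex_deriv_mono[OF assms(1,2), of G z] assms(4)
    by fastforce+
qed

lemma net_gain_unimodal:
  fixes c :: "real \<Rightarrow> real"
  assumes "convex_on UNIV c" "\<forall>x. c differentiable (at x)"
    and "\<exists>!x. deriv c x = 1" "deriv c G = 1"
  shows "strict_mono_on {..G} (\<lambda>x. x - c x)" and "strict_antimono_on {G..} (\<lambda>x. x - c x)"
proof -
  have deriv: "((\<lambda>x. x - c x) has_real_derivative 1 - deriv c z) (at z)" for z
    using assms(2) by (auto intro!: derivative_eq_intros simp: DERIV_deriv_iff_real_differentiable)
  then have cont: "continuous_on S (\<lambda>x. x - c x)" for S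
    by (meson DERIV_isCont continuous_at_imp_continuous_on)
  note slope = convex_deriv_below_above_one[OF assms]
  show "strict_mono_on {..G} (\<lambda>x. x - c x)"
  proof (rule strict_mono_onI)
    fix x y assume "x \<in> {..G}" "y \<in> {..G}" "x < y"
    moreover have "\<exists>d. ((\<lambda>x. x - c x) has_real_derivative d) (at z) \<and> d > 0"
      if "x < z" "z < y" for z
      using deriv[of z] slope(1)[of z] that \<open>y \<in> {..G}\<close> by auto
    ultimately show "x - c x < y - c y"
      using DERIV_pos_imp_increasing_open[OF _ _ cont] by blast
  qed
  show "strict_antimono_on {G..} (\<lambda>x. x - c x)"
  proof (rule monotone_onI)
    fix x y assume "x \<in> {G..}" "y \<in> {G..}" "x < y"
    moreover have "\<exists>d. ((\<lambda>x. x - c x) has_real_derivative d) (at z) \<and> d < 0"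
      if "x < z" "z < y" for z
      using deriv[of z] slope(2)[of z] that \<open>x \<in> {G..}\<close> by auto
    ultimately show "y - c y < x - c x"
      using DERIV_neg_imp_decreasing_open[OF _ _ cont] by blast
  qed
qed

lemma unimodal_argmax_atMost:
  fixes f :: "real \<Rightarrow> real"
  assumes "strict_mono_on {..m} f" "strict_antimono_on {m..} f" "t \<le> B" "t \<noteq> min B m"
  shows "f t < f (min B m)"
proof (cases "t < min B m")
  case True
  then show ?thesis
    using assms(1) by (auto intro: monotone_onD)
next
  case False
  then have "m < t" "min B m = m"
    using assms(3,4) by auto
  then show ?thesis
    using assms(2) by (auto intro: monotone_onD)
qed

lemma seller_utility_strict_max:
  assumes "convex_on UNIV c" "\<forall>x. c differentiable (at x)" "\<exists>!x. deriv c x = 1"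
    and "t \<le> B" "t \<noteq> min B (sp_price N b + gamma c)"
  shows "seller_utility c N b t < seller_utility c N b (min B (sp_price N b + gamma c))"
proof -
  let ?p = "sp_price N b" and ?g = "\<lambda>x. x - c x"
  have "deriv c (gamma c) = 1"
    unfolding gamma_def by (rule theI'[OF assms(3)])
  note gain = net_gain_unimodal[OF assms(1-3) this]
  have utility: "seller_utility c N b t = ?g (t - ?p) + ?p" for t
    unfolding seller_utility_def by simp
  have "strict_mono_on {..?p + gamma c} (seller_utility c N b)"
  proof (rule strict_mono_onI)
    fix x y assume "x \<in> {..?p + gamma c}" "y \<in> {..?p + gamma c}" "x < y"
    then have "?g (x - ?p) < ?g (y - ?p)"
      using monotone_onD[OF gain(1), of "x - ?p" "y - ?p"] by simp
    then show "seller_utility c N b x < seller_utility c N b y"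
      unfolding utility by simp
  qed
  moreover have "strict_antimono_on {?p + gamma c..} (seller_utility c N b)"
  proof (rule monotone_onI)
    fix x y assume "x \<in> {?p + gamma c..}" "y \<in> {?p + gamma c..}" "x < y"
    then have "?g (y - ?p) < ?g (x - ?p)"
      using monotone_onD[OF gain(2), of "x - ?p" "y - ?p"] by simp
    then show "seller_utility c N b y < seller_utility c N b x"
      unfolding utility by simp
  qed
  ultimately show ?thesis
    using assms(4,5) by (rule unimodal_argmax_atMost)
qed

lemma seller_optimal_iff_unique_max:
  assumes "finite N" "N \<noteq> {}" "0 \<le> T" "T \<le> first_bid N b"
    and "\<And>t. t \<le> first_bid N b \<Longrightarrow> t \<noteq> T \<Longrightarrow> seller_utility c N b t < seller_utility c N b T"
  shows "seller_optimal c N b y t \<longleftrightarrow> feasible N b y t \<and> t = T"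
proof -
  have feasible_bounds: "0 \<le> t \<and> t \<le> first_bid N b" if "feasible N b y t" for y t
    using exists_feasible_iff[OF assms(1,2)] that by blast
  obtain y\<^sub>T where "feasible N b y\<^sub>T T"
    using exists_feasible_iff[OF assms(1,2)] assms(3,4) by blast
  note T_max = assms(5)[OF conjunct2[OF feasible_bounds]]
  show ?thesis
    unfolding seller_optimal_def
  proof safe
    fix y' t' assume "feasible N b y' t'"
    then show "seller_utility c N b t' \<le> seller_utility c N b T"
      using T_max by (cases "t' = T") (auto intro: less_imp_le)
  next
    assume "\<forall>y' t'. feasible N b y' t' \<longrightarrow> seller_utility c N b t' \<le> seller_utility c N b t"
      and "feasible N b y t"
    then show "t = T"
      using \<open>feasible N b y\<^sub>T T\<close> T_max[of y t] by force
  qed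
qed

theorem proposition1:
  fixes N :: "'a set" and b :: "'a \<Rightarrow> real" and c :: "real \<Rightarrow> real"
  assumes finN: "finite N" and cardN: "card N \<ge> 2"
    and bids_nonneg: "\<forall>i\<in>N. b i \<ge> 0"
    and bids_distinct: "inj_on b N"
    and c_diff: "\<forall>x. c differentiable (at x)"
    and c_convex: "convex_on UNIV c"
    and c_incr: "strict_mono_on {0..} c"
    and c_decr: "\<forall>x y. x < y \<and> y < 0 \<longrightarrow> c y < c x"
    and c_zero: "c 0 = 0"
    and c_deriv0: "deriv c 0 \<le> 1"
    and gamma_ex: "\<exists>!x. deriv c x = 1"
    and gamma_pos: "gamma c > 0"
  shows "\<forall>y t. seller_optimal c N b y t \<longleftrightarrow>
           (y \<in> N \<and> b y = first_bid N b \<and>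
            t = min (first_bid N b) (second_bid N b + gamma c))"
proof (intro allI)
  fix y t
  define T where "T = min (first_bid N b) (second_bid N b + gamma c)"
  have N_ne: "N \<noteq> {}"
    using cardN by auto
  have p_less: "second_bid N b < first_bid N b"
    using second_bid_less_first_bid[OF finN bids_distinct cardN] .
  have p_ge0: "second_bid N b \<ge> 0"
    using second_bid_in[OF finN bids_distinct cardN] bids_nonneg by auto
  have T_max: "seller_utility c N b t' < seller_utility c N b T" if "t' \<le> first_bid N b" "t' \<noteq> T" for t'
    using seller_utility_strict_max[OF c_convex c_diff gamma_ex, of t' "first_bid N b" N b] that
    unfolding T_def sp_price_def by simp
  have "seller_optimal c N b y t \<longleftrightarrow> feasible N b y t \<and> t = T"
    using p_less p_ge0 gamma_pos T_max unfolding T_def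
    by (intro seller_optimal_iff_unique_max[OF finN N_ne]) auto
  also have "\<dots> \<longleftrightarrow> y \<in> N \<and> b y = first_bid N b \<and> t = T"
    using bid_le_first_bid[OF finN, of y b] bid_le_second_bid[OF finN, of y b]
      p_less p_ge0 gamma_pos unfolding feasible_def T_def by force
  finally show "seller_optimal c N b y t \<longleftrightarrow> y \<in> N \<and> b y = first_bid N b \<and> t = T" .
qed

end
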